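(* Let $X$ be a finite connected simplicial complex, $\hat X$ its first barycentric subdivision, and $\delta$ a cellular perversity. Let $\hat\Delta,\hat\Delta'$ be simplices of $\hat X$ with $\hat\Delta$ a codimension-one face of $\hat\Delta'$, and suppose $\hat\Delta\subseteq{}^{-\delta}\Delta$ and $\hat\Delta'\subseteq{}^{-\delta}\Delta'$ for simplices $\Delta,\Delta'$ of $X$. Then $\Delta\leftrightarrow\Delta'$ and $\Delta\ge\Delta'$ in $\Lambda(X,\delta)$.
   Context: Simplices are open; $\Delta\leftrightarrow\Delta'$ means one is a face of the other. Cellular perversity: $\delta:\mathbb Z_{\ge0}\to\mathbb Z$, $\delta(0)=0$, bijective from each $\{0,\dots,k\}$ onto an interval $\{a,\dots,a+k\}$, $a\le0$; $\delta(\Delta)=\delta(\dim\Delta)$. A simplex $\hat\Delta$ of $\hat X$ has vertices the barycenters $c_0,\dots,c_s$ of simplices $\Delta_0,\dots,\Delta_s$ of $X$; $\max_{-\delta}\hat\Delta$ is the $c_i$ with $-\delta(\Delta_i)$ maximal; ${}^{-\delta}\Delta=\bigsqcup_{\max_{-\delta}\hat\Delta=c}\hat\Delta$ for $\Delta$ with barycenter $c$. $\Lambda(X,\delta)$: $\Delta\ge\Delta'$ iff there is a chain $\Delta=\Delta_0,\dots,\Delta_r=\Delta'$ ($r\ge0$) with $\Delta_i\leftrightarrow\Delta_{i+1}$, $\delta(\Delta_i)=\delta(\Delta_{i+1})+1$. *)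

theory Defs
  imports Main
begin

text \<open>A simplicial complex is given abstractly by its set of simplices,
each simplex being its (nonempty, finite) vertex set; open simplices of X correspond
bijectively to these vertex sets. A simplex of the barycentric subdivision is a nonempty
chain (w.r.t. strict inclusion) of simplices of X, the vertex c_i being the barycenter of
the simplex Delta_i, so we identify barycenters with the simplices themselves.\<close>

definition simplicial_complex :: "'a set set \<Rightarrow> bool" where
  "simplicial_complex X \<longleftrightarrow>
     (\<forall>s\<in>X. finite s \<and> s \<noteq> {}) \<and> (\<forall>s\<in>X. \<forall>t. t \<subseteq> s \<and> t \<noteq> {} \<longrightarrow> t \<in> X)"

definition complex_connected :: "'a set set \<Rightarrow> bool" where
  "complex_connected X \<longleftrightarrow> \<Union>X \<noteq> {} \<and>
     (\<forall>u\<in>\<Union>X. \<forall>v\<in>\<Union>X. (\<lambda>x y. {x, y} \<in> X)\<^sup>*\<^sup>* u v)"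

definition sdim :: "'a set \<Rightarrow> nat" where
  "sdim s = card s - 1"

definition incident :: "'a set \<Rightarrow> 'a set \<Rightarrow> bool" where
  "incident s t \<longleftrightarrow> s \<subseteq> t \<or> t \<subseteq> s"

definition cellular_perversity :: "(nat \<Rightarrow> int) \<Rightarrow> bool" where
  "cellular_perversity \<delta> \<longleftrightarrow> \<delta> 0 = 0 \<and>
     (\<forall>k. \<exists>a\<le>0. bij_betw \<delta> {0..k} {a..a + int k})"

definition bary_simplex :: "'a set set \<Rightarrow> 'a set set \<Rightarrow> bool" where
  "bary_simplex X c \<longleftrightarrow> c \<noteq> {} \<and> finite c \<and> c \<subseteq> X \<and>
     (\<forall>s\<in>c. \<forall>t\<in>c. s \<subseteq> t \<or> t \<subseteq> s)"

definition bary_codim1_face :: "'a set set \<Rightarrow> 'a set set \<Rightarrow> 'a set set \<Rightarrow> bool" where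
  "bary_codim1_face X c c' \<longleftrightarrow> bary_simplex X c \<and> bary_simplex X c' \<and>
     c \<subseteq> c' \<and> card c' = card c + 1"

definition max_neg_delta :: "(nat \<Rightarrow> int) \<Rightarrow> 'a set set \<Rightarrow> 'a set" where
  "max_neg_delta \<delta> c = (THE s. s \<in> c \<and> (\<forall>t\<in>c. - \<delta> (sdim t) \<le> - \<delta> (sdim s)))"

text \<open>The dual cell ^{-delta}Delta, as the set of (open) subdivision simplices forming it.
An open simplex of the subdivision is contained in this disjoint union iff it is one of them.\<close>
definition dual_cell :: "(nat \<Rightarrow> int) \<Rightarrow> 'a set set \<Rightarrow> 'a set \<Rightarrow> 'a set set set" where
  "dual_cell \<delta> X \<Delta> = {c. bary_simplex X c \<and> max_neg_delta \<delta> c = \<Delta>}"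

definition Lambda_ge :: "'a set set \<Rightarrow> (nat \<Rightarrow> int) \<Rightarrow> 'a set \<Rightarrow> 'a set \<Rightarrow> bool" where
  "Lambda_ge X \<delta> \<Delta> \<Delta>' \<longleftrightarrow>
     (\<lambda>s t. s \<in> X \<and> t \<in> X \<and> incident s t \<and> \<delta> (sdim s) = \<delta> (sdim t) + 1)\<^sup>*\<^sup>* \<Delta> \<Delta>'"

end

theory Submission
  imports Defs
begin

text \<open>Since \<open>c \<subseteq> c'\<close>, both \<open>\<Delta>\<close> and \<open>\<Delta>'\<close> are vertices of the chain \<open>c'\<close>, so they are incident,
  and \<open>\<delta> \<Delta>' \<le> \<delta> \<Delta>\<close> because \<open>\<Delta>'\<close> minimises \<open>\<delta>\<close> on \<open>c'\<close>. Let \<open>B\<close> be the larger of the two.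
  On dimensions \<open>0..dim B\<close> the perversity is a bijection onto an interval, so every value between
  \<open>\<delta> \<Delta>'\<close> and \<open>\<delta> \<Delta>\<close> is \<open>\<delta>\<close> of some dimension, and among the faces of \<open>B\<close> of any dimension
  there is one incident to both \<open>\<Delta>\<close> and \<open>\<Delta>'\<close>. Descending one unit of \<open>\<delta>\<close> at a time through
  such faces yields the chain witnessing \<open>\<Delta> \<ge> \<Delta>'\<close>.\<close>

lemma cellular_perversity_inj:
  assumes "cellular_perversity \<delta>"
  shows "inj \<delta>"
proof (rule injI)
  fix m n assume "\<delta> m = \<delta> n"
  obtain a where "bij_betw \<delta> {0..max m n} {a..a + int (max m n)}"
    using assms unfolding cellular_perversity_def by blast
  then have "inj_on \<delta> {0..max m n}"
    by (rule bij_betw_imp_inj_on)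
  then show "m = n"
    using \<open>\<delta> m = \<delta> n\<close> by (auto dest: inj_onD)
qed

lemma cellular_perversity_intermediate_value:
  assumes "cellular_perversity \<delta>" and "i \<le> k" "j \<le> k" and "\<delta> i \<le> x" "x \<le> \<delta> j"
  obtains d where "d \<le> k" "\<delta> d = x"
proof -
  obtain a where bij: "bij_betw \<delta> {0..k} {a..a + int k}"
    using assms(1) unfolding cellular_perversity_def by blast
  then have "\<delta> i \<in> {a..a + int k}" "\<delta> j \<in> {a..a + int k}"
    using assms(2,3) by (auto dest: bij_betw_apply)
  with bij assms(4,5) have "x \<in> \<delta> ` {0..k}"
    by (auto simp: bij_betw_def)
  with that show thesis
    by auto
qed

lemma simplicial_complex_face:
  assumes "simplicial_complex X" "s \<in> X" "t \<subseteq> s" "t \<noteq> {}"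
  shows "t \<in> X"
  using assms unfolding simplicial_complex_def by blast

lemma simplicial_complex_finite_nonempty:
  assumes "simplicial_complex X" "s \<in> X"
  shows "finite s" "s \<noteq> {}"
  using assms unfolding simplicial_complex_def by blast+

lemma sdim_mono:
  assumes "finite s" "t \<subseteq> s"
  shows "sdim t \<le> sdim s"
  using card_mono[OF assms] unfolding sdim_def by simp

lemma incident_sym:
  "incident s t \<longleftrightarrow> incident t s"
  unfolding incident_def by blast

lemma incident_eq_if_perversity_eq:
  assumes "simplicial_complex X" "cellular_perversity \<delta>" "s \<in> X" "t \<in> X"
    and "incident s t" "\<delta> (sdim s) = \<delta> (sdim t)"
  shows "s = t"
proof -
  have fin: "finite s" "finite t" and "s \<noteq> {}" "t \<noteq> {}"
    using assms(1,3,4) by (auto dest: simplicial_complex_finite_nonempty)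
  then have "card s > 0" "card t > 0"
    by auto
  moreover have "sdim s = sdim t"
    using assms(6) cellular_perversity_inj[OF assms(2)] by (auto dest: injD)
  ultimately have "card s = card t"
    unfolding sdim_def by arith
  then show ?thesis
    using assms(5) fin card_subset_eq unfolding incident_def by metis
qed

lemma exists_card_subset_incident_to_chain:
  assumes "finite B" "lo \<subseteq> hi" "hi \<subseteq> B" "n \<le> card B"
  obtains v where "v \<subseteq> B" "card v = n" "incident lo v" "incident hi v"
proof -
  have "finite hi"
    using assms(1,3) by (rule rev_finite_subset)
  then have "finite lo"
    using assms(2) by (rule rev_finite_subset)
  consider "n \<le> card lo" | "card lo \<le> n" "n \<le> card hi" | "card hi \<le> n"
    by linarith
  then show thesis
  proof cases
    case 1
    with exists_subset_between[of "{}" n lo] \<open>finite lo\<close>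
    obtain v where "v \<subseteq> lo" "card v = n" by auto
    with assms show thesis by (intro that[of v]) (auto simp: incident_def)
  next
    case 2
    with exists_subset_between[of lo n hi] \<open>finite hi\<close> assms(2)
    obtain v where "lo \<subseteq> v" "v \<subseteq> hi" "card v = n" by auto
    with assms show thesis by (intro that[of v]) (auto simp: incident_def)
  next
    case 3
    with exists_subset_between[of hi n B] assms
    obtain v where "hi \<subseteq> v" "v \<subseteq> B" "card v = n" by auto
    with assms show thesis by (intro that[of v]) (auto simp: incident_def)
  qed
qed

lemma exists_card_subset_incident_to_both:
  assumes "finite B" "t \<subseteq> B" "u \<subseteq> B" "incident t u" "n \<le> card B"
  obtains v where "v \<subseteq> B" "card v = n" "incident t v" "incident v u"
  using assms(4) unfolding incident_def
proof
  assume "t \<subseteq> u"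
  then obtain v where "v \<subseteq> B" "card v = n" "incident t v" "incident u v"
    using exists_card_subset_incident_to_chain[of B t u n] assms by blast
  then show thesis
    using that[of v] by (simp add: incident_sym)
next
  assume "u \<subseteq> t"
  then obtain v where "v \<subseteq> B" "card v = n" "incident u v" "incident t v"
    using exists_card_subset_incident_to_chain[of B u t n] assms by blast
  then show thesis
    using that[of v] by (simp add: incident_sym)
qed

lemma Lambda_ge_faces_of_simplex:
  assumes X: "simplicial_complex X" and \<delta>: "cellular_perversity \<delta>"
    and B: "B \<in> X" and "t \<subseteq> B" "u \<subseteq> B" "t \<noteq> {}" "u \<noteq> {}" "incident t u"
    and "\<delta> (sdim u) \<le> \<delta> (sdim t)"
  shows "Lambda_ge X \<delta> t u"
  using assms(4-)
proof (induction "nat (\<delta> (sdim t) - \<delta> (sdim u))" arbitrary: t)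
  case 0
  then have "t \<in> X" "u \<in> X" "\<delta> (sdim t) = \<delta> (sdim u)"
    using simplicial_complex_face[OF X B] by auto
  with 0 have "t = u"
    using incident_eq_if_perversity_eq[OF X \<delta>] by blast
  then show ?case
    unfolding Lambda_ge_def by simp
next
  case (Suc n)
  have finB: "finite B" and "B \<noteq> {}"
    using simplicial_complex_finite_nonempty[OF X B] by auto
  have "\<delta> (sdim u) \<le> \<delta> (sdim t) - 1"
    using Suc.hyps(2) by linarith
  then obtain d where d: "d \<le> sdim B" "\<delta> d = \<delta> (sdim t) - 1"
    using cellular_perversity_intermediate_value[OF \<delta> sdim_mono[OF finB \<open>u \<subseteq> B\<close>]
        sdim_mono[OF finB \<open>t \<subseteq> B\<close>], of "\<delta> (sdim t) - 1"] by auto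
  have "card B > 0"
    using \<open>B \<noteq> {}\<close> finB by (simp add: card_gt_0_iff)
  then have "d + 1 \<le> card B"
    using d(1) unfolding sdim_def by linarith
  then obtain v where v: "v \<subseteq> B" "card v = d + 1" "incident t v" "incident v u"
    using exists_card_subset_incident_to_both[OF finB \<open>t \<subseteq> B\<close> \<open>u \<subseteq> B\<close> \<open>incident t u\<close>]
    by blast
  have "v \<noteq> {}" "sdim v = d"
    using v(2) unfolding sdim_def by auto
  have "Lambda_ge X \<delta> v u"
  proof (rule Suc.hyps(1))
    show "n = nat (\<delta> (sdim v) - \<delta> (sdim u))"
      using Suc.hyps(2) d(2) \<open>sdim v = d\<close> by (auto simp: nat_eq_iff2 split: if_splits)
  qed (use v Suc.prems \<open>v \<noteq> {}\<close> \<open>sdim v = d\<close> d(2) \<open>\<delta> (sdim u) \<le> \<delta> (sdim t) - 1\<close> in auto)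
  moreover have "t \<in> X \<and> v \<in> X \<and> incident t v \<and> \<delta> (sdim t) = \<delta> (sdim v) + 1"
    using simplicial_complex_face[OF X B] Suc.prems v \<open>v \<noteq> {}\<close> d(2) \<open>sdim v = d\<close> by auto
  ultimately show ?case
    unfolding Lambda_ge_def by (rule converse_rtranclp_into_rtranclp[rotated])
qed

lemma max_neg_delta_minimises:
  assumes X: "simplicial_complex X" and \<delta>: "cellular_perversity \<delta>" and c: "bary_simplex X c"
  shows "max_neg_delta \<delta> c \<in> c" "t \<in> c \<Longrightarrow> \<delta> (sdim (max_neg_delta \<delta> c)) \<le> \<delta> (sdim t)"
proof -
  let ?f = "\<lambda>t. \<delta> (sdim t)"
  have "finite c" "c \<noteq> {}" "c \<subseteq> X" and chain: "\<forall>s\<in>c. \<forall>t\<in>c. incident s t"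
    using c unfolding bary_simplex_def incident_def by auto
  then obtain s where s: "s \<in> c" "?f s = Min (?f ` c)"
    by (metis (no_types, lifting) Min_in finite_imageI image_iff image_is_empty)
  then have s_min: "\<forall>t\<in>c. ?f s \<le> ?f t"
    using \<open>finite c\<close> by simp
  have "max_neg_delta \<delta> c = s"
    unfolding max_neg_delta_def
  proof (rule the_equality)
    show "s \<in> c \<and> (\<forall>t\<in>c. - ?f t \<le> - ?f s)"
      using s(1) s_min by simp
  next
    fix s' assume s': "s' \<in> c \<and> (\<forall>t\<in>c. - ?f t \<le> - ?f s')"
    with s(1) s_min have "?f s' = ?f s"
      by (metis antisym neg_le_iff_le)
    with s' s(1) chain \<open>c \<subseteq> X\<close> show "s' = s"
      using incident_eq_if_perversity_eq[OF X \<delta>] by blast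
  qed
  with s(1) s_min show "max_neg_delta \<delta> c \<in> c" "t \<in> c \<Longrightarrow> ?f (max_neg_delta \<delta> c) \<le> ?f t"
    by auto
qed

theorem lemma3p2p2:
  fixes X :: "'a set set" and \<delta> :: "nat \<Rightarrow> int"
    and c c' :: "'a set set" and \<Delta> \<Delta>' :: "'a set"
  assumes "simplicial_complex X" and "finite X" and "complex_connected X"
    and "cellular_perversity \<delta>"
    and "bary_codim1_face X c c'"
    and "\<Delta> \<in> X" and "\<Delta>' \<in> X"
    and "c \<in> dual_cell \<delta> X \<Delta>" and "c' \<in> dual_cell \<delta> X \<Delta>'"
  shows "incident \<Delta> \<Delta>' \<and> Lambda_ge X \<delta> \<Delta> \<Delta>'"
proof -
  have c: "bary_simplex X c" and c': "bary_simplex X c'" and "c \<subseteq> c'"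
    using assms(5) unfolding bary_codim1_face_def by auto
  have "\<Delta> = max_neg_delta \<delta> c" "\<Delta>' = max_neg_delta \<delta> c'"
    using assms(8,9) unfolding dual_cell_def by auto
  then have "\<Delta> \<in> c'" "\<Delta>' \<in> c'" and le: "\<delta> (sdim \<Delta>') \<le> \<delta> (sdim \<Delta>)"
    using max_neg_delta_minimises[OF assms(1,4) c] max_neg_delta_minimises[OF assms(1,4) c']
      \<open>c \<subseteq> c'\<close> by auto
  then have inc: "incident \<Delta> \<Delta>'"
    using c' unfolding bary_simplex_def incident_def by blast
  then have "\<Delta> \<union> \<Delta>' \<in> X"
    using assms(6,7) unfolding incident_def by (auto simp: sup.absorb1 sup.absorb2)
  then have "Lambda_ge X \<delta> \<Delta> \<Delta>'"
    using Lambda_ge_faces_of_simplex[OF assms(1,4)] inc le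
      simplicial_complex_finite_nonempty[OF assms(1)] assms(6,7) by blast
  with inc show ?thesis
    by blast
qed

end
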